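(* The forcing $\mathbb{T}$ is not c.c.c.: letting $E\subseteq\omega$ be the even numbers and $O=\omega\setminus E$, and for each $a\subseteq O$ letting $p_a:=\{t\in 3^{<\omega}: \forall n\in O\cap|t|\,((n\in a\rightarrow t(n)=1)\wedge(n\notin a\rightarrow t(n)=0))\}$, the family $\{p_a: a\subseteq O\}$ consists of conditions of $\mathbb{T}$ and is an antichain of size $2^{\aleph_0}$.
   Context: $\mathbb{T}$ is the tree-forcing (ordered by inclusion) consisting of perfect trees $p\subseteq 3^{<\omega}$ together with a set $A_p\subseteq\omega$ (the splitting levels of $p$) such that: for every $t\in p$, $|t|\in A_p$ iff $t$ is a splitting node of $p$; every splitting node $t$ is fully splitting (i.e. $t^\frown i\in p$ for every $i\in 3$); for every $s\supseteq \mathrm{stem}(p)$ which is not splitting, $s^\frown 2\notin p$; and for all non-splitting $s,t\in p$ with $|s|=|t|$ and all $i\in 2$, $s^\frown i\in p\Leftrightarrow t^\frown i\in p$. Here $s^\frown i$ denotes the sequence $s$ extended by the value $i$, and $\mathrm{stem}(p)$ is the longest node of $p$ comparable with every node of $p$. *)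

theory Defs
  imports Main "HOL-Library.Sublist" "HOL-Library.Equipollence" "HOL-Library.Countable_Set"
begin

text \<open>Finite sequences in 3^{<omega} are lists over {0,1,2}; t(n) is t ! n;
  s extends t iff prefix t s; s^i is s @ [i].\<close>

definition seq3 :: "nat list set" where
  "seq3 = {t. set t \<subseteq> {0,1,2}}"

definition is_tree :: "nat list set \<Rightarrow> bool" where
  "is_tree p \<longleftrightarrow> p \<noteq> {} \<and> p \<subseteq> seq3 \<and> (\<forall>t\<in>p. \<forall>s. prefix s t \<longrightarrow> s \<in> p)"

definition splitting :: "nat list set \<Rightarrow> nat list \<Rightarrow> bool" where
  "splitting p t \<longleftrightarrow> t \<in> p \<and> (\<exists>i j. i \<noteq> j \<and> t @ [i] \<in> p \<and> t @ [j] \<in> p)"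

definition perfect_tree :: "nat list set \<Rightarrow> bool" where
  "perfect_tree p \<longleftrightarrow> is_tree p \<and> (\<forall>t\<in>p. \<exists>s\<in>p. prefix t s \<and> splitting p s)"

definition comparable :: "nat list \<Rightarrow> nat list \<Rightarrow> bool" where
  "comparable s t \<longleftrightarrow> prefix s t \<or> prefix t s"

definition stem :: "nat list set \<Rightarrow> nat list" where
  "stem p = (THE s. s \<in> p \<and> (\<forall>u\<in>p. comparable s u) \<and>
     (\<forall>s'. s' \<in> p \<and> (\<forall>u\<in>p. comparable s' u) \<longrightarrow> length s' \<le> length s))"

definition T_cond :: "nat list set \<Rightarrow> nat set \<Rightarrow> bool" where
  "T_cond p A \<longleftrightarrow> perfect_tree p
     \<and> (\<forall>t\<in>p. length t \<in> A \<longleftrightarrow> splitting p t)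
     \<and> (\<forall>t\<in>p. splitting p t \<longrightarrow> (\<forall>i<3. t @ [i] \<in> p))
     \<and> (\<forall>s\<in>p. prefix (stem p) s \<and> \<not> splitting p s \<longrightarrow> s @ [2] \<notin> p)
     \<and> (\<forall>s\<in>p. \<forall>t\<in>p. \<not> splitting p s \<and> \<not> splitting p t \<and> length s = length t \<longrightarrow>
          (\<forall>i<2. s @ [i] \<in> p \<longleftrightarrow> t @ [i] \<in> p))"

text \<open>The forcing T (conditions are the trees; A_p is determined by p), ordered by inclusion.\<close>
definition Tforcing :: "nat list set set" where
  "Tforcing = {p. \<exists>A. T_cond p A}"

definition T_compatible :: "nat list set \<Rightarrow> nat list set \<Rightarrow> bool" where
  "T_compatible p q \<longleftrightarrow> (\<exists>r\<in>Tforcing. r \<subseteq> p \<and> r \<subseteq> q)"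

definition T_antichain :: "nat list set set \<Rightarrow> bool" where
  "T_antichain X \<longleftrightarrow> X \<subseteq> Tforcing \<and> (\<forall>p\<in>X. \<forall>q\<in>X. p \<noteq> q \<longrightarrow> \<not> T_compatible p q)"

definition T_ccc :: bool where
  "T_ccc \<longleftrightarrow> (\<forall>X. T_antichain X \<longrightarrow> countable X)"

definition Odds :: "nat set" where
  "Odds = {n. odd n}"

definition p_of :: "nat set \<Rightarrow> nat list set" where
  "p_of a = {t \<in> seq3. \<forall>n\<in>Odds. n < length t \<longrightarrow>
              ((n \<in> a \<longrightarrow> t ! n = 1) \<and> (n \<notin> a \<longrightarrow> t ! n = 0))}"

end

theory Submission
  imports Defs
begin

text \<open>In \<open>p_of a\<close> the even levels split fully and every odd level \<open>n\<close> is frozen to the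
  value \<open>1\<close> or \<open>0\<close> according as \<open>n \<in> a\<close>, so \<open>p_of a\<close> is a condition with splitting levels
  the even numbers. Every condition has nodes of every length, so a common extension of
  \<open>p_of a\<close> and \<open>p_of b\<close> would contain a node passing through an odd level where \<open>a\<close> and
  \<open>b\<close> disagree, which is impossible. Hence \<open>a \<mapsto> p_of a\<close> is injective on the subsets of
  the odd numbers and its image is an antichain of size continuum.\<close>

lemma mem_p_of_iff:
  "t \<in> p_of a \<longleftrightarrow> set t \<subseteq> {0,1,2} \<and>
     (\<forall>n. odd n \<longrightarrow> n < length t \<longrightarrow> t ! n = (if n \<in> a then 1 else 0))"
  by (auto simp: p_of_def seq3_def Odds_def)

lemma snoc_mem_p_of_iff:
  "t @ [i] \<in> p_of a \<longleftrightarrow> t \<in> p_of a \<and> i \<in> {0,1,2} \<and>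
     (odd (length t) \<longrightarrow> i = (if length t \<in> a then 1 else 0))"
  unfolding mem_p_of_iff by (auto simp: nth_append less_Suc_eq)

lemma splitting_p_of_iff: "splitting (p_of a) t \<longleftrightarrow> t \<in> p_of a \<and> even (length t)"
  unfolding splitting_def snoc_mem_p_of_iff by (cases "length t \<in> a") auto

lemma is_tree_p_of: "is_tree (p_of a)"
proof -
  have "[] \<in> p_of a"
    by (simp add: mem_p_of_iff)
  moreover have "s \<in> p_of a" if "t \<in> p_of a" "prefix s t" for s t
    using that unfolding mem_p_of_iff by (auto simp: prefix_def nth_append)
  ultimately show ?thesis
    unfolding is_tree_def p_of_def by blast
qed

lemma perfect_tree_p_of: "perfect_tree (p_of a)"
  unfolding perfect_tree_def
proof (intro conjI ballI is_tree_p_of)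
  fix t assume t: "t \<in> p_of a"
  show "\<exists>s\<in>p_of a. prefix t s \<and> splitting (p_of a) s"
  proof (cases "even (length t)")
    case True
    then show ?thesis using t by (auto simp: splitting_p_of_iff)
  next
    case False
    let ?s = "t @ [if length t \<in> a then 1 else 0]"
    have "?s \<in> p_of a" using t by (simp add: snoc_mem_p_of_iff)
    with False show ?thesis by (auto simp: splitting_p_of_iff intro!: bexI[of _ ?s])
  qed
qed

text \<open>The clause about the stem holds for \<open>p_of a\<close> at every node, so the stem is never computed.\<close>
lemma T_cond_p_of: "T_cond (p_of a) {n. even n}"
  unfolding T_cond_def
proof (intro conjI ballI impI allI perfect_tree_p_of)
  fix t i assume "t \<in> p_of a" "splitting (p_of a) t" "i < (3::nat)"
  then show "t @ [i] \<in> p_of a"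
    unfolding splitting_p_of_iff snoc_mem_p_of_iff by (auto simp: numeral_3_eq_3 less_Suc_eq)
qed (auto simp: splitting_p_of_iff snoc_mem_p_of_iff)

lemma p_of_in_Tforcing: "p_of a \<in> Tforcing"
  using T_cond_p_of by (auto simp: Tforcing_def)

lemma Tforcing_long_node:
  assumes "r \<in> Tforcing"
  shows "\<exists>t\<in>r. k \<le> length t"
proof (induction k)
  case 0
  then show ?case
    using assms by (auto simp: Tforcing_def T_cond_def perfect_tree_def is_tree_def)
next
  case (Suc k)
  then obtain t where t: "t \<in> r" "k \<le> length t"
    by auto
  then obtain s where s: "prefix t s" "splitting r s"
    using assms by (auto simp: Tforcing_def T_cond_def perfect_tree_def)
  then obtain i where "s @ [i] \<in> r"
    unfolding splitting_def by auto
  moreover have "length t \<le> length s"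
    using s(1) by (rule prefix_length_le)
  ultimately show ?case
    using t by (intro bexI[of _ "s @ [i]"]) auto
qed

lemma T_compatible_refl: "p \<in> Tforcing \<Longrightarrow> T_compatible p p"
  unfolding T_compatible_def by blast

lemma p_of_not_compatible:
  assumes "a \<inter> Odds \<noteq> b \<inter> Odds"
  shows "\<not> T_compatible (p_of a) (p_of b)"
proof
  assume "T_compatible (p_of a) (p_of b)"
  then obtain r where r: "r \<in> Tforcing" "r \<subseteq> p_of a" "r \<subseteq> p_of b"
    by (auto simp: T_compatible_def)
  obtain n where n: "odd n" "n \<in> a \<longleftrightarrow> n \<notin> b"
    using assms by (auto simp: Odds_def)
  obtain t where "t \<in> r" "Suc n \<le> length t"
    using Tforcing_long_node[OF r(1)] by blast
  with r have "t \<in> p_of a" "t \<in> p_of b" "n < length t"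
    by auto
  with n show False
    unfolding mem_p_of_iff by (auto split: if_splits)
qed

lemma inj_on_p_of: "inj_on p_of (Pow Odds)"
proof
  fix a b assume "a \<in> Pow Odds" "b \<in> Pow Odds" "p_of a = p_of b"
  then show "a = b"
    using p_of_not_compatible[of a b] T_compatible_refl[OF p_of_in_Tforcing]
    by (metis Int_absorb2 PowD)
qed

lemma T_antichain_p_of: "T_antichain (p_of ` Pow Odds)"
  unfolding T_antichain_def
proof (intro conjI ballI impI)
  show "p_of ` Pow Odds \<subseteq> Tforcing"
    using p_of_in_Tforcing by blast
next
  fix p q assume "p \<in> p_of ` Pow Odds" "q \<in> p_of ` Pow Odds" "p \<noteq> q"
  then obtain a b where "a \<subseteq> Odds" "b \<subseteq> Odds" "p = p_of a" "q = p_of b" "a \<noteq> b"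
    by blast
  then show "\<not> T_compatible p q"
    using p_of_not_compatible[of a b] by (simp add: Int_absorb2)
qed

lemma bij_betw_Odds: "bij_betw (\<lambda>n::nat. 2 * n + 1) UNIV Odds"
proof (rule bij_betwI')
  show "y \<in> Odds \<Longrightarrow> \<exists>n\<in>UNIV. y = 2 * n + 1" for y
    by (auto simp: Odds_def elim: oddE)
qed (auto simp: Odds_def)

lemma p_of_Pow_Odds_eqpoll: "p_of ` Pow Odds \<approx> (UNIV :: nat set set)"
proof -
  have "p_of ` Pow Odds \<approx> Pow Odds"
    using inj_on_p_of by (rule inj_on_image_eqpoll_self)
  also have "Pow Odds \<approx> Pow (UNIV :: nat set)"
    using bij_betw_image_Pow[OF bij_betw_Odds] eqpoll_def eqpoll_sym by blast
  finally show ?thesis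
    by simp
qed

lemma uncountable_UNIV_nat_set: "uncountable (UNIV :: nat set set)"
proof
  assume "countable (UNIV :: nat set set)"
  then have "range (from_nat_into (UNIV :: nat set set)) = Pow UNIV"
    by (simp add: range_from_nat_into)
  with Cantors_theorem show False
    by blast
qed

theorem mainTheorem1:
  shows "\<not> T_ccc
    \<and> (\<forall>a. a \<subseteq> Odds \<longrightarrow> p_of a \<in> Tforcing)
    \<and> T_antichain (p_of ` Pow Odds)
    \<and> p_of ` Pow Odds \<approx> (UNIV :: nat set set)"
proof -
  have "uncountable (p_of ` Pow Odds)"
    using p_of_Pow_Odds_eqpoll uncountable_UNIV_nat_set countable_eqpoll eqpoll_sym by blast
  then have "\<not> T_ccc"
    using T_antichain_p_of unfolding T_ccc_def by blast
  then show ?thesis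
    using p_of_in_Tforcing T_antichain_p_of p_of_Pow_Odds_eqpoll by blast
qed

end
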